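(* Let $K\ge1$ and $C\ge1$, and define for $t\in(0,1)$ $$H(t)={\rm th}\Big(\frac{C}{2}\max\{2\,{\rm arth}(t),(2\,{\rm arth}(t))^{1/K}\}\Big).$$ Then $H(t)\le C t^{1/K}$ for all $t\in(0,1)$, and thus $H$ is Hölder continuous with exponent $1/K$.
   Context: ${\rm th}$ and ${\rm arth}$ denote the hyperbolic tangent and its inverse. *)

theory Defs
  imports "HOL-Analysis.Analysis"
begin

definition H_fun :: "real \<Rightarrow> real \<Rightarrow> real \<Rightarrow> real" where
  "H_fun K C t = tanh ((C / 2) * max (2 * artanh t) ((2 * artanh t) powr (1 / K)))"

end

theory Submission
  imports Defs
begin

(*
  Write x = 2 artanh t, so that t = tanh (x/2) and H(t) = tanh (C m / 2) with m = max x (x^(1/K)).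
  Concavity of tanh on [0,oo) gives tanh (c y) <= c tanh y for c >= 1, y >= 0, hence
  H(t) <= C tanh (m/2), and tanh (m/2) <= t^(1/K): trivially if m = x, and for x < 1 because
  tanh (x^(1/K)/2) <= x^(1/K-1) tanh (x/2) <= t^(1/K-1) t, using t <= x.

  For the Hoelder bound split (0,1) at tanh (1/2), where x = 1. Below it H is the composite of
  Lipschitz maps with the (1/K)-Hoelder power x^(1/K); above it H(t) = tanh (C artanh t) is
  C-Lipschitz, its derivative being C (1 - tanh^2 (C artanh t)) / (1 - tanh^2 (artanh t)) <= C.
  Hoelder bounds on two adjacent intervals add up.
*)

definition holder_on :: "real \<Rightarrow> real \<Rightarrow> 'a::metric_space set \<Rightarrow> ('a \<Rightarrow> 'b::metric_space) \<Rightarrow> bool"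
  where "holder_on p M S f \<longleftrightarrow> 0 \<le> M \<and> (\<forall>x\<in>S. \<forall>y\<in>S. dist (f x) (f y) \<le> M * dist x y powr p)"

lemma holder_on_cong: "holder_on p M S f \<longleftrightarrow> holder_on p M S g" if "\<And>x. x \<in> S \<Longrightarrow> f x = g x"
  using that by (simp add: holder_on_def)

lemma lipschitz_on_imp_holder_on:
  assumes lip: "L-lipschitz_on S f" and "p \<le> 1"
    and diam: "\<And>x y. x \<in> S \<Longrightarrow> y \<in> S \<Longrightarrow> dist x y \<le> 1"
  shows "holder_on p L S f"
  unfolding holder_on_def
proof (intro conjI ballI)
  show "0 \<le> L"
    using lipschitz_on_nonneg[OF lip] .
  fix x y assume xy: "x \<in> S" "y \<in> S"
  have "dist x y \<le> dist x y powr p"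
    using powr_mono'[OF \<open>p \<le> 1\<close>, of "dist x y"] diam[OF xy] by (cases "x = y") auto
  then show "dist (f x) (f y) \<le> L * dist x y powr p"
    using lipschitz_onD[OF lip xy] lipschitz_on_nonneg[OF lip] by (meson mult_left_mono order_trans)
qed

lemma holder_on_compose_lipschitz:
  assumes f: "holder_on p M S f" and g: "L-lipschitz_on (f ` S) g"
  shows "holder_on p (L * M) S (g \<circ> f)"
  unfolding holder_on_def
proof (intro conjI ballI)
  show "0 \<le> L * M"
    using f lipschitz_on_nonneg[OF g] by (simp add: holder_on_def)
  fix x y assume xy: "x \<in> S" "y \<in> S"
  have "dist (g (f x)) (g (f y)) \<le> L * dist (f x) (f y)"
    using lipschitz_onD[OF g] xy by blast
  also have "\<dots> \<le> L * (M * dist x y powr p)"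
    using f xy lipschitz_on_nonneg[OF g] by (intro mult_left_mono) (auto simp: holder_on_def)
  finally show "dist ((g \<circ> f) x) ((g \<circ> f) y) \<le> L * M * dist x y powr p"
    by (simp add: mult.assoc)
qed

lemma lipschitz_compose_holder_on:
  assumes g: "L-lipschitz_on S g" and "g ` S \<subseteq> T" and f: "holder_on p M T f" and "0 \<le> p"
  shows "holder_on p (M * L powr p) S (f \<circ> g)"
  unfolding holder_on_def
proof (intro conjI ballI)
  have "0 \<le> M"
    using f by (simp add: holder_on_def)
  then show "0 \<le> M * L powr p"
    by simp
  fix x y assume xy: "x \<in> S" "y \<in> S"
  then have "dist (f (g x)) (f (g y)) \<le> M * dist (g x) (g y) powr p"
    using f \<open>g ` S \<subseteq> T\<close> by (auto simp: holder_on_def)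
  also have "\<dots> \<le> M * (L * dist x y) powr p"
    using lipschitz_onD[OF g xy] \<open>0 \<le> M\<close> \<open>0 \<le> p\<close> by (intro mult_left_mono powr_mono2) auto
  finally show "dist ((f \<circ> g) x) ((f \<circ> g) y) \<le> M * L powr p * dist x y powr p"
    by (simp add: powr_mult mult.assoc)
qed

lemma holder_on_split:
  fixes f :: "real \<Rightarrow> 'b::metric_space"
  assumes left: "holder_on p M1 (S \<inter> {..b}) f" and right: "holder_on p M2 (S \<inter> {b..}) f"
    and "b \<in> S" "0 \<le> p"
  shows "holder_on p (M1 + M2) S f"
proof -
  have M: "0 \<le> M1" "0 \<le> M2"
    using left right by (simp_all add: holder_on_def)
  have ordered: "dist (f x) (f y) \<le> (M1 + M2) * dist x y powr p"
    if xy: "x \<in> S" "y \<in> S" "x \<le> y" for x y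
  proof -
    have grow: "M * dist x y powr p \<le> (M1 + M2) * dist x y powr p" if "M = M1 \<or> M = M2" for M
      using that M by (intro mult_right_mono) auto
    consider "y \<le> b" | "b \<le> x" | "x < b" "b < y"
      by linarith
    then show ?thesis
    proof cases
      case 1
      then show ?thesis
        using left xy grow[of M1] unfolding holder_on_def by (meson IntI atMost_iff order_trans)
    next
      case 2
      then show ?thesis
        using right xy grow[of M2] unfolding holder_on_def by (meson IntI atLeast_iff order_trans)
    next
      case 3
      have "dist (f x) (f y) \<le> dist (f x) (f b) + dist (f b) (f y)"
        by (rule dist_triangle)
      also have "\<dots> \<le> M1 * dist x b powr p + M2 * dist b y powr p"
        using left right 3 xy \<open>b \<in> S\<close> unfolding holder_on_def by (intro add_mono) auto
      also have "\<dots> \<le> M1 * dist x y powr p + M2 * dist x y powr p"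
        using 3 M \<open>0 \<le> p\<close> by (intro add_mono mult_left_mono powr_mono2) (auto simp: dist_real_def)
      finally show ?thesis
        by (simp add: distrib_right)
    qed
  qed
  show ?thesis
    unfolding holder_on_def using M ordered by (metis add_nonneg_nonneg dist_commute linorder_linear)
qed

lemma powr_add_le_add_powr:
  fixes a b p :: real
  assumes "0 \<le> a" "0 \<le> b" "0 < p" "p \<le> 1"
  shows "(a + b) powr p \<le> a powr p + b powr p"
proof (cases "a + b = 0")
  case True
  then show ?thesis using assms by auto
next
  case False
  then have s: "a + b > 0" using assms by auto
  have "a / (a + b) \<le> (a / (a + b)) powr p"
    using powr_mono'[of p 1 "a / (a + b)"] assms s by simp
  moreover have "b / (a + b) \<le> (b / (a + b)) powr p"
    using powr_mono'[of p 1 "b / (a + b)"] assms s by simp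
  moreover have "a / (a + b) + b / (a + b) = 1"
    using s by (simp add: add_divide_distrib[symmetric])
  ultimately have "1 \<le> (a / (a + b)) powr p + (b / (a + b)) powr p"
    by linarith
  also have "\<dots> = (a powr p + b powr p) / (a + b) powr p"
    using assms s by (simp add: powr_divide add_divide_distrib)
  finally show ?thesis
    using s by (simp add: divide_simps)
qed

lemma holder_on_powr:
  fixes p :: real
  assumes "0 < p" "p \<le> 1"
  shows "holder_on p 1 {0..} (\<lambda>x. x powr p)"
proof -
  have "y powr p - x powr p \<le> (y - x) powr p" if "0 \<le> x" "x \<le> y" for x y :: real
    using powr_add_le_add_powr[of x "y - x" p] that assms by simp
  moreover have "x powr p \<le> y powr p" if "0 \<le> x" "x \<le> y" for x y :: real
    using powr_mono2[of p x y] that assms by simp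
  ultimately have "\<bar>x powr p - y powr p\<bar> \<le> \<bar>x - y\<bar> powr p" if "0 \<le> x" "0 \<le> y" for x y :: real
    using that by (cases "x \<le> y") (fastforce simp: abs_minus_commute)+
  then show ?thesis
    by (simp add: holder_on_def dist_real_def)
qed

lemma lipschitz_on_real_derivative_bound:
  fixes f :: "real \<Rightarrow> real"
  assumes "convex S" "0 \<le> L"
    and "\<And>x. x \<in> S \<Longrightarrow> (f has_real_derivative f' x) (at x within S)"
    and "\<And>x. x \<in> S \<Longrightarrow> \<bar>f' x\<bar> \<le> L"
  shows "L-lipschitz_on S f"
  using field_differentiable_bound[OF assms(1,3)] assms(2,4)
  by (auto intro!: lipschitz_onI simp: dist_real_def)

lemma tanh_artanh_real:
  fixes t :: real
  assumes "\<bar>t\<bar> < 1"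
  shows "tanh (artanh t) = t"
proof -
  have p: "1 + t > 0" "1 - t > 0"
    using assms by auto
  have "- 2 * artanh t = ln ((1 - t) / (1 + t))"
    using p by (simp add: artanh_def ln_div)
  then have "exp (- 2 * artanh t) = (1 - t) / (1 + t)"
    using p by simp
  moreover have "1 + exp (- 2 * artanh t) > 0"
    by (smt (verit) exp_gt_zero)
  ultimately show ?thesis
    using p by (simp add: tanh_real_altdef divide_simps) (simp add: algebra_simps)
qed

lemma artanh_nonneg:
  fixes t :: real
  assumes "0 \<le> t" "t < 1"
  shows "0 \<le> artanh t"
  using assms tanh_real_nonneg_iff[of "artanh t"] tanh_artanh_real[of t] by simp

lemma lipschitz_on_tanh: "1-lipschitz_on S (tanh :: real \<Rightarrow> real)"
proof (rule lipschitz_on_subset)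
  have "\<bar>1 - tanh x ^ 2\<bar> \<le> 1" for x :: real
  proof -
    have "tanh x ^ 2 < 1"
      using tanh_real_bounds[of x] by (simp add: abs_square_less_1 abs_less_iff)
    then show ?thesis
      by (simp add: abs_le_iff)
  qed
  then show "1-lipschitz_on UNIV (tanh :: real \<Rightarrow> real)"
    by (intro lipschitz_on_real_derivative_bound[where f' = "\<lambda>x. 1 - tanh x ^ 2"])
      (auto intro!: derivative_eq_intros)
qed simp

lemma lipschitz_on_artanh:
  fixes b :: real
  assumes "0 \<le> b" "b < 1"
  shows "(1 / (1 - b\<^sup>2))-lipschitz_on {-b..b} artanh"
proof (rule lipschitz_on_real_derivative_bound[where f' = "\<lambda>x. 1 / (1 - x\<^sup>2)"])
  show "0 \<le> 1 / (1 - b\<^sup>2)"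
    using assms by (simp add: abs_square_less_1 less_imp_le)
  fix x assume "x \<in> {-b..b}"
  then have "\<bar>x\<bar> \<le> b"
    by auto
  then have "x\<^sup>2 \<le> b\<^sup>2" "\<bar>x\<bar> < 1"
    using power_mono[of "\<bar>x\<bar>" b 2] assms by auto
  moreover have "b\<^sup>2 < 1"
    using assms by (simp add: abs_square_less_1)
  ultimately show "\<bar>1 / (1 - x\<^sup>2)\<bar> \<le> 1 / (1 - b\<^sup>2)"
    "(artanh has_real_derivative 1 / (1 - x\<^sup>2)) (at x within {-b..b})"
    by (auto intro!: derivative_eq_intros frac_le)
qed simp

lemma tanh_mult_le:
  fixes c a :: real
  assumes "1 \<le> c" "0 \<le> a"
  shows "tanh (c * a) \<le> c * tanh a"
proof -
  have "(\<lambda>x. c * tanh x - tanh (c * x)) 0 \<le> (\<lambda>x. c * tanh x - tanh (c * x)) a"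
  proof (rule DERIV_nonneg_imp_nondecreasing[OF assms(2)])
    fix x :: real assume "0 \<le> x"
    then have "tanh x \<le> tanh (c * x)" "0 \<le> tanh x"
      using assms by (simp_all add: mult_right_mono[of 1 c x, simplified])
    then have "tanh x ^ 2 \<le> tanh (c * x) ^ 2"
      by (rule power_mono)
    then have "c * (1 - tanh x ^ 2) - (1 - tanh (c * x) ^ 2) * c \<ge> 0"
      using assms by (simp add: algebra_simps)
    moreover have "DERIV (\<lambda>x. c * tanh x - tanh (c * x)) x
        :> c * (1 - tanh x ^ 2) - (1 - tanh (c * x) ^ 2) * c"
      by (auto intro!: derivative_eq_intros)
    ultimately show "\<exists>y. DERIV (\<lambda>x. c * tanh x - tanh (c * x)) x :> y \<and> y \<ge> 0"
      by blast
  qed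
  then show ?thesis
    by simp
qed

lemma lipschitz_on_tanh_mult_artanh:
  fixes C :: real
  assumes "1 \<le> C"
  shows "C-lipschitz_on {0..<1} (\<lambda>t. tanh (C * artanh t))"
proof (rule lipschitz_on_real_derivative_bound
    [where f' = "\<lambda>t. (1 - tanh (C * artanh t) ^ 2) * (C * (1 / (1 - t ^ 2)))"])
  fix t :: real assume "t \<in> {0..<1}"
  then have t: "\<bar>t\<bar> < 1" "0 \<le> t" and "0 \<le> artanh t"
    by (auto intro: artanh_nonneg)
  then have "t \<le> tanh (C * artanh t)"
    using assms tanh_artanh_real[OF t(1)] tanh_real_le_iff[of "artanh t" "C * artanh t"]
    by (simp add: mult_right_mono[of 1 C "artanh t", simplified])
  then have "1 - tanh (C * artanh t) ^ 2 \<le> 1 - t ^ 2"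
    using t by (simp add: power_mono)
  moreover have "0 < 1 - t ^ 2" "0 < 1 - tanh (C * artanh t) ^ 2"
    using t tanh_real_bounds[of "C * artanh t"] by (simp_all add: abs_square_less_1 abs_less_iff)
  ultimately have q: "0 \<le> (1 - tanh (C * artanh t) ^ 2) / (1 - t ^ 2)"
      "(1 - tanh (C * artanh t) ^ 2) / (1 - t ^ 2) \<le> 1"
    by simp_all
  moreover have "\<bar>C * q\<bar> \<le> C" if "0 \<le> q" "q \<le> 1" for q
    using that assms mult_left_le[of q C] by (subst abs_of_nonneg) auto
  ultimately have "\<bar>C * ((1 - tanh (C * artanh t) ^ 2) / (1 - t ^ 2))\<bar> \<le> C"
    by blast
  then show "\<bar>(1 - tanh (C * artanh t) ^ 2) * (C * (1 / (1 - t ^ 2)))\<bar> \<le> C"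
    by (simp add: mult.commute)
  show "((\<lambda>t. tanh (C * artanh t)) has_real_derivative
      (1 - tanh (C * artanh t) ^ 2) * (C * (1 / (1 - t ^ 2)))) (at t within {0..<1})"
    using t by (auto intro!: derivative_eq_intros)
qed (use assms in auto)

lemma tanh_half_max_powr_le:
  fixes x p :: real
  assumes "0 < x" "0 < p" "p \<le> 1"
  shows "tanh (max x (x powr p) / 2) \<le> tanh (x / 2) powr p"
proof (cases "1 \<le> x")
  case True
  then have "max x (x powr p) = x"
    using powr_mono[OF \<open>p \<le> 1\<close> True] by simp
  moreover have "tanh (x / 2) \<le> tanh (x / 2) powr p"
    using powr_mono'[OF \<open>p \<le> 1\<close>, of "tanh (x / 2)"] assms(1) tanh_real_lt_1[of "x / 2"] by simp
  ultimately show ?thesis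
    by simp
next
  case False
  define t where "t = tanh (x / 2)"
  have "t \<le> x / 2"
    using lipschitz_onD[OF lipschitz_on_tanh[of UNIV], of "x / 2" 0] \<open>0 < x\<close>
    by (simp add: t_def dist_real_def)
  then have t: "0 < t" "t \<le> x"
    using \<open>0 < x\<close> by (auto simp: t_def)
  have "x powr 1 \<le> x powr p"
    using powr_mono'[OF \<open>p \<le> 1\<close>, of x] False \<open>0 < x\<close> by simp
  then have "max x (x powr p) = x powr p" and ratio: "1 \<le> x powr (p - 1)"
    using \<open>0 < x\<close> by (simp_all add: powr_diff)
  then have "tanh (max x (x powr p) / 2) = tanh (x powr (p - 1) * (x / 2))"
    using \<open>0 < x\<close> by (simp add: powr_diff)
  also have "\<dots> \<le> x powr (p - 1) * t"
    unfolding t_def using tanh_mult_le[OF ratio, of "x / 2"] \<open>0 < x\<close> by simp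
  also have "\<dots> \<le> t powr (p - 1) * t"
    using powr_mono2'[of "p - 1" t x] \<open>p \<le> 1\<close> t by (intro mult_right_mono) auto
  also have "\<dots> = t powr p"
    using t by (simp add: powr_diff)
  finally show ?thesis
    by (simp add: t_def)
qed

lemma H_fun_le:
  fixes K C t :: real
  assumes "1 \<le> K" "1 \<le> C" "0 < t" "t < 1"
  shows "H_fun K C t \<le> C * t powr (1 / K)"
proof -
  define x where "x = 2 * artanh t"
  have "0 < x"
    using assms tanh_real_pos_iff[of "artanh t"] tanh_artanh_real[of t] by (simp add: x_def)
  have "H_fun K C t = tanh (C * (max x (x powr (1 / K)) / 2))"
    by (simp add: H_fun_def x_def)
  also have "\<dots> \<le> C * tanh (max x (x powr (1 / K)) / 2)"
    using tanh_mult_le[OF \<open>1 \<le> C\<close>, of "max x (x powr (1 / K)) / 2"] \<open>0 < x\<close> by simp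
  also have "\<dots> \<le> C * tanh (x / 2) powr (1 / K)"
    using tanh_half_max_powr_le[of x "1 / K"] \<open>0 < x\<close> assms by simp
  also have "tanh (x / 2) = t"
    using assms tanh_artanh_real[of t] by (simp add: x_def)
  finally show ?thesis .
qed

lemma H_fun_eq_below:
  fixes K C t :: real
  assumes "1 \<le> K" "0 < t" "t \<le> tanh (1 / 2)"
  shows "H_fun K C t = tanh (C / 2 * (2 * artanh t) powr (1 / K))"
proof -
  have "\<bar>t\<bar> < 1"
    using assms tanh_real_lt_1[of "1 / 2"] by simp
  then have "0 \<le> 2 * artanh t" "2 * artanh t \<le> 1"
    using assms artanh_nonneg[of t] tanh_real_le_iff[of "artanh t" "1 / 2"]
    by (simp_all add: tanh_artanh_real)
  then have "2 * artanh t \<le> (2 * artanh t) powr (1 / K)"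
    using powr_mono'[of "1 / K" 1 "2 * artanh t"] assms by simp
  then show ?thesis
    by (simp add: H_fun_def)
qed

lemma H_fun_eq_above:
  fixes K C t :: real
  assumes "1 \<le> K" "tanh (1 / 2) \<le> t" "t < 1"
  shows "H_fun K C t = tanh (C * artanh t)"
proof -
  have "0 < tanh (1 / 2 :: real)"
    by simp
  then have "\<bar>t\<bar> < 1"
    using assms(2,3) by linarith
  then have "1 \<le> 2 * artanh t"
    using assms tanh_real_le_iff[of "1 / 2" "artanh t"] by (simp add: tanh_artanh_real)
  then have "(2 * artanh t) powr (1 / K) \<le> 2 * artanh t"
    using powr_mono[of "1 / K" 1 "2 * artanh t"] assms by simp
  then show ?thesis
    by (simp add: H_fun_def)
qed

lemma holder_on_H_fun_below:
  fixes K C :: real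
  assumes "1 \<le> K" "1 \<le> C"
  shows "\<exists>M. holder_on (1 / K) M {0<..tanh (1 / 2)} (H_fun K C)"
proof -
  define b :: real where "b = tanh (1 / 2)"
  define p where "p = 1 / K"
  define L where "L = 2 * (1 / (1 - b\<^sup>2))"
  have b: "0 < b" "b < 1" and p: "0 < p" "p \<le> 1"
    using assms tanh_real_lt_1[of "1 / 2"] by (auto simp: b_def p_def)
  have lip_artanh: "L-lipschitz_on {0<..b} (\<lambda>t. 2 * artanh t)"
    unfolding L_def using b
    by (intro lipschitz_on_cmult_real_nonneg lipschitz_on_subset[OF lipschitz_on_artanh]) auto
  have "(\<lambda>t. 2 * artanh t) ` {0<..b} \<subseteq> {0..}"
    using b by (auto intro!: artanh_nonneg)
  from lipschitz_compose_holder_on[OF lip_artanh this holder_on_powr[OF p]]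
  have inner: "holder_on p (1 * L powr p) {0<..b} ((\<lambda>x. x powr p) \<circ> (\<lambda>t. 2 * artanh t))"
    using p by simp
  have lip_tanh: "(1 * (C / 2 * 1))-lipschitz_on U (\<lambda>y. tanh (C / 2 * y))" for U
    using assms
    by (intro lipschitz_on_compose2[OF lipschitz_on_cmult_real_nonneg[OF lipschitz_on_id]
          lipschitz_on_tanh]) simp
  have "holder_on p ((1 * (C / 2 * 1)) * (1 * L powr p)) {0<..b}
      ((\<lambda>y. tanh (C / 2 * y)) \<circ> ((\<lambda>x. x powr p) \<circ> (\<lambda>t. 2 * artanh t)))"
    by (rule holder_on_compose_lipschitz[OF inner lip_tanh])
  moreover have "holder_on p M {0<..b} (H_fun K C) \<longleftrightarrow>
      holder_on p M {0<..b} ((\<lambda>y. tanh (C / 2 * y)) \<circ> ((\<lambda>x. x powr p) \<circ> (\<lambda>t. 2 * artanh t)))"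
    for M
    using assms by (intro holder_on_cong) (simp add: H_fun_eq_below b_def p_def)
  ultimately show ?thesis
    unfolding b_def p_def by blast
qed

lemma holder_on_H_fun_above:
  fixes K C :: real
  assumes "1 \<le> K" "1 \<le> C"
  shows "holder_on (1 / K) C {tanh (1 / 2)..<1} (H_fun K C)"
proof -
  have b: "0 < tanh (1 / 2 :: real)"
    by simp
  then have sub: "{tanh (1 / 2)..<1} \<subseteq> {0..<1::real}"
    by auto
  have "holder_on (1 / K) C {tanh (1 / 2)..<1} (\<lambda>t. tanh (C * artanh t))"
    using assms sub b
    by (intro lipschitz_on_imp_holder_on lipschitz_on_subset[OF lipschitz_on_tanh_mult_artanh])
      (use b in \<open>auto simp: dist_real_def abs_le_iff simp del: tanh_real_pos_iff\<close>)
  then show ?thesis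
    using assms by (subst holder_on_cong) (auto simp: H_fun_eq_above)
qed

lemma holder_on_H_fun:
  fixes K C :: real
  assumes "1 \<le> K" "1 \<le> C"
  shows "\<exists>M. holder_on (1 / K) M {0<..<1} (H_fun K C)"
proof -
  have b: "0 < tanh (1 / 2 :: real)" "tanh (1 / 2 :: real) < 1"
    by (simp_all add: tanh_real_lt_1)
  obtain M where below: "holder_on (1 / K) M {0<..tanh (1 / 2)} (H_fun K C)"
    using holder_on_H_fun_below assms by blast
  have "holder_on (1 / K) (M + C) {0<..<1} (H_fun K C)"
  proof (rule holder_on_split)
    have "{0<..<1} \<inter> {..tanh (1 / 2)} = {0<..tanh (1 / 2 :: real)}"
      using b(2) by auto
    then show "holder_on (1 / K) M ({0<..<1} \<inter> {..tanh (1 / 2)}) (H_fun K C)"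
      using below by simp
    have "{0<..<1} \<inter> {tanh (1 / 2)..} = {tanh (1 / 2 :: real)..<1}"
      using b(1) by (auto simp del: tanh_real_pos_iff)
    then show "holder_on (1 / K) C ({0<..<1} \<inter> {tanh (1 / 2)..}) (H_fun K C)"
      using holder_on_H_fun_above[OF assms] by simp
  qed (use assms b in auto)
  then show ?thesis
    by blast
qed

theorem theorem5p3:
  fixes K C :: real
  assumes "K \<ge> 1" and "C \<ge> 1"
  shows "(\<forall>t \<in> {0<..<1}. H_fun K C t \<le> C * t powr (1 / K)) \<and>
         (\<exists>M. \<forall>s \<in> {0<..<1}. \<forall>t \<in> {0<..<1}.
              \<bar>H_fun K C s - H_fun K C t\<bar> \<le> M * \<bar>s - t\<bar> powr (1 / K))"
proof -
  obtain M where "holder_on (1 / K) M {0<..<1} (H_fun K C)"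
    using holder_on_H_fun assms by blast
  then have "\<forall>s \<in> {0<..<1}. \<forall>t \<in> {0<..<1}.
      \<bar>H_fun K C s - H_fun K C t\<bar> \<le> M * \<bar>s - t\<bar> powr (1 / K)"
    by (simp add: holder_on_def dist_real_def)
  then show ?thesis
    using H_fun_le assms by auto
qed

end
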